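(* Let $M\ge1$, $T\ge M+1$, $n\ge1$ be integers and $p=\frac1{M+1}$. Let $\mathbf{c}_1,\dots,\mathbf{c}_T\in\{0,1\}^n$ be random words whose $Tn$ bits are independent, each equal to $1$ with probability $p$. Let $E_{\mathrm{id}}$ be the event that there exist $t\in\{1,\dots,T\}$, a set $S\subseteq\{1,\dots,T\}\setminus\{t\}$ with $|S|=M$, and shifts $s_u\in\{0,\dots,n-1\}$ ($u\in S$) such that $\bigvee_{u\in S}\sigma_{s_u}(\mathbf{c}_u)$ covers $\mathbf{c}_t$. Then \[\Pr(E_{\mathrm{id}})\le \exp\!\Big((M+1)\ln T+M\ln n-\tfrac{n}{M+1}\mathrm{e}^{-1}\Big).\]
   Context: $\vee$ is componentwise Boolean OR. A vector $\mathbf{y}$ covers $\mathbf{z}$ if $y_i\ge z_i$ for all $i$. For $\mathbf{c}\in\{0,1\}^n$ and $s\in\{0,\dots,n-1\}$, $\sigma_s(\mathbf{c})$ is defined by $(\sigma_s(\mathbf{c}))_i=c_{i-s}$ if $i>s$ and $0$ otherwise. *)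

theory Defs
  imports "HOL-Probability.Probability"
begin

text \<open>A configuration of the T words is a map c :: nat \<times> nat \<Rightarrow> bool, where
  c (u, i) is bit i (1 \<le> i \<le> n) of word u (1 \<le> u \<le> T).\<close>

definition word :: "(nat \<times> nat \<Rightarrow> bool) \<Rightarrow> nat \<Rightarrow> nat \<Rightarrow> bool" where
  "word c u = (\<lambda>i. c (u, i))"

definition shift :: "nat \<Rightarrow> (nat \<Rightarrow> bool) \<Rightarrow> nat \<Rightarrow> bool" where
  "shift s w i = (if i > s then w (i - s) else False)"

definition covers :: "nat \<Rightarrow> (nat \<Rightarrow> bool) \<Rightarrow> (nat \<Rightarrow> bool) \<Rightarrow> bool" where
  "covers n y z = (\<forall>i\<in>{1..n}. z i \<longrightarrow> y i)"

definition bigor :: "nat set \<Rightarrow> (nat \<Rightarrow> nat \<Rightarrow> bool) \<Rightarrow> nat \<Rightarrow> bool" where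
  "bigor S f = (\<lambda>i. \<exists>u\<in>S. f u i)"

definition E_id :: "nat \<Rightarrow> nat \<Rightarrow> nat \<Rightarrow> (nat \<times> nat \<Rightarrow> bool) set" where
  "E_id T M n = {c. \<exists>t\<in>{1..T}. \<exists>S. S \<subseteq> {1..T} - {t} \<and> card S = M \<and>
      (\<exists>sh :: nat \<Rightarrow> nat. (\<forall>u\<in>S. sh u < n) \<and>
         covers n (bigor S (\<lambda>u. shift (sh u) (word c u))) (word c t))}"

definition bits_pmf :: "nat \<Rightarrow> nat \<Rightarrow> real \<Rightarrow> (nat \<times> nat \<Rightarrow> bool) pmf" where
  "bits_pmf T n p = Pi_pmf ({1..T} \<times> {1..n}) False (\<lambda>_. bernoulli_pmf p)"

end

theory Submission
  imports Defs
begin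

(* Union bound over the at most T^(M+1) n^M choices of t, S and shifts. For a fixed choice,
   position i of c_t stays uncovered exactly when its bit is 1 and the at most M bits shifted
   onto position i are all 0. Distinct positions involve disjoint sets of bits, so these n events
   are independent, each of probability at least p (1-p)^M >= p/e; hence a fixed choice covers
   c_t with probability at most (1 - p/e)^n <= exp(-np/e). *)

lemma prob_Pi_pmf_restrict:
  assumes "finite I" "J \<subseteq> I" "\<And>c c'. (\<forall>x\<in>J. c x = c' x) \<Longrightarrow> P c = P c'"
  shows "measure_pmf.prob (Pi_pmf I d q) {c. P c} = measure_pmf.prob (Pi_pmf J d q) {c. P c}"
proof -
  have "Pi_pmf J d q = map_pmf (\<lambda>f x. if x \<in> J then f x else d) (Pi_pmf I d q)"
    by (rule Pi_pmf_subset) (use assms in auto)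
  moreover have "(\<lambda>f x. if x \<in> J then f x else d) -` {c. P c} = {c. P c}"
    using assms(3)[of "\<lambda>x. if x \<in> J then _ x else d"] by auto
  ultimately show ?thesis by simp
qed

lemma prob_Pi_pmf_Un_indep:
  assumes "finite A" "finite B" "A \<inter> B = {}"
    and "\<And>c c'. (\<forall>x\<in>A. c x = c' x) \<Longrightarrow> P c = P c'"
    and "\<And>c c'. (\<forall>x\<in>B. c x = c' x) \<Longrightarrow> Q c = Q c'"
  shows "measure_pmf.prob (Pi_pmf (A \<union> B) d q) {c. P c \<and> Q c} =
         measure_pmf.prob (Pi_pmf A d q) {c. P c} * measure_pmf.prob (Pi_pmf B d q) {c. Q c}"
proof -
  let ?glue = "\<lambda>(f, g) x. if x \<in> A then f x else g x"
  let ?PA = "Pi_pmf A d q" and ?PB = "Pi_pmf B d q"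
  have glue_P: "P (?glue (f, g)) = P f" for f g
    by (rule assms(4)) auto
  have glue_Q: "Q (?glue (f, g)) = Q g" for f g
    by (rule assms(5)) (use assms(3) in auto)
  have "measure_pmf.prob (Pi_pmf (A \<union> B) d q) {c. P c \<and> Q c} =
        measure_pmf.prob (pair_pmf ?PA ?PB) (?glue -` {c. P c \<and> Q c})"
    by (simp add: Pi_pmf_union[OF assms(1-3)])
  also have "\<dots> = measure_pmf.prob (pair_pmf ?PA ?PB)
                       ((?glue -` {c. P c \<and> Q c}) \<inter> set_pmf (pair_pmf ?PA ?PB))"
    by (rule measure_Int_set_pmf[symmetric])
  also have "(?glue -` {c. P c \<and> Q c}) \<inter> set_pmf (pair_pmf ?PA ?PB) =
             ({c. P c} \<inter> set_pmf ?PA) \<times> ({c. Q c} \<inter> set_pmf ?PB)"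
    using glue_P glue_Q by auto
  also have "measure_pmf.prob (pair_pmf ?PA ?PB) \<dots> =
             measure_pmf.prob ?PA ({c. P c} \<inter> set_pmf ?PA) *
             measure_pmf.prob ?PB ({c. Q c} \<inter> set_pmf ?PB)"
    by (rule measure_pmf_prob_product) (auto intro: countable_subset[OF _ countable_set_pmf])
  finally show ?thesis
    by (simp add: measure_Int_set_pmf)
qed

lemma prob_Pi_pmf_Ball_indep:
  assumes "finite I" "finite K" "\<And>k. k \<in> K \<Longrightarrow> D k \<subseteq> I"
    and "\<And>k l. k \<in> K \<Longrightarrow> l \<in> K \<Longrightarrow> k \<noteq> l \<Longrightarrow> D k \<inter> D l = {}"
    and "\<And>k c c'. k \<in> K \<Longrightarrow> (\<forall>x\<in>D k. c x = c' x) \<Longrightarrow> B k c = B k c'"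
  shows "measure_pmf.prob (Pi_pmf I d q) {c. \<forall>k\<in>K. B k c} =
         (\<Prod>k\<in>K. measure_pmf.prob (Pi_pmf I d q) {c. B k c})"
  using assms(2-5)
proof (induction K rule: finite_induct)
  case empty
  then show ?case by simp
next
  case (insert a K)
  define U where "U = \<Union>(D ` K)"
  have U: "finite U" "U \<subseteq> I" "D a \<inter> U = {}"
    using insert.prems(1,2) insert.hyps(1,2) assms(1) unfolding U_def
    by (auto intro: finite_subset) blast
  have Da: "finite (D a)" "D a \<subseteq> I"
    using insert.prems(1) assms(1) by (auto intro: finite_subset)
  have local_a: "B a c = B a c'" if "\<forall>x\<in>D a. c x = c' x" for c c'
    using insert.prems(3) that by blast
  have local_K: "(\<forall>k\<in>K. B k c) = (\<forall>k\<in>K. B k c')" if "\<forall>x\<in>U. c x = c' x" for c c'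
    using insert.prems(3) that unfolding U_def by (metis UN_I insertCI)
  have local_aK: "(B a c \<and> (\<forall>k\<in>K. B k c)) = (B a c' \<and> (\<forall>k\<in>K. B k c'))"
    if "\<forall>x\<in>D a \<union> U. c x = c' x" for c c'
    using local_a[of c c'] local_K[of c c'] that by auto
  let ?prob = "\<lambda>J E. measure_pmf.prob (Pi_pmf J d q) {c. E c}"
  have "?prob I (\<lambda>c. \<forall>k\<in>insert a K. B k c) = ?prob I (\<lambda>c. B a c \<and> (\<forall>k\<in>K. B k c))"
    by simp
  also have "\<dots> = ?prob (D a \<union> U) (\<lambda>c. B a c \<and> (\<forall>k\<in>K. B k c))"
    by (rule prob_Pi_pmf_restrict[OF assms(1)]) (use Da U local_aK in auto)
  also have "\<dots> = ?prob (D a) (B a) * ?prob U (\<lambda>c. \<forall>k\<in>K. B k c)"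
    by (rule prob_Pi_pmf_Un_indep[OF Da(1) U(1) U(3)]) (use local_a local_K in auto)
  also have "?prob (D a) (B a) = ?prob I (B a)"
    by (rule prob_Pi_pmf_restrict[OF assms(1), symmetric]) (use Da local_a in auto)
  also have "?prob U (\<lambda>c. \<forall>k\<in>K. B k c) = ?prob I (\<lambda>c. \<forall>k\<in>K. B k c)"
    by (rule prob_Pi_pmf_restrict[OF assms(1), symmetric]) (use U local_K in auto)
  also have "\<dots> = (\<Prod>k\<in>K. ?prob I (B k))"
    by (rule insert.IH) (use insert.prems in auto)
  finally show ?case
    using insert.hyps by simp
qed

lemma prob_Pi_pmf_cylinder:
  assumes "finite I" "D \<subseteq> I"
  shows "measure_pmf.prob (Pi_pmf I d q) {c. \<forall>x\<in>D. c x = f x} = (\<Prod>x\<in>D. pmf (q x) (f x))"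
proof -
  have "{c. \<forall>x\<in>D. c x = f x} = Pi I (\<lambda>x. if x \<in> D then {f x} else UNIV)"
    using assms(2) by (auto simp: Pi_def)
  then have "measure_pmf.prob (Pi_pmf I d q) {c. \<forall>x\<in>D. c x = f x} =
             (\<Prod>x\<in>I. if x \<in> D then pmf (q x) (f x) else 1)"
    by (simp add: measure_Pi_pmf_Pi[OF assms(1)] if_distrib measure_pmf_single cong: if_cong)
  also have "\<dots> = (\<Prod>x\<in>D. pmf (q x) (f x))"
    using assms by (simp add: prod.If_cases Int_absorb1)
  finally show ?thesis .
qed

definition uncovered_at :: "nat set \<Rightarrow> (nat \<Rightarrow> nat) \<Rightarrow> nat \<Rightarrow> nat \<Rightarrow> (nat \<times> nat \<Rightarrow> bool) \<Rightarrow> bool" where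
  "uncovered_at S sh t i c \<longleftrightarrow> c (t, i) \<and> (\<forall>u\<in>S. sh u < i \<longrightarrow> \<not> c (u, i - sh u))"

definition source_bits :: "nat set \<Rightarrow> (nat \<Rightarrow> nat) \<Rightarrow> nat \<Rightarrow> nat \<Rightarrow> (nat \<times> nat) set" where
  "source_bits S sh t i = insert (t, i) ((\<lambda>u. (u, i - sh u)) ` {u\<in>S. sh u < i})"

definition covering_event :: "nat \<Rightarrow> nat \<Rightarrow> nat set \<Rightarrow> (nat \<Rightarrow> nat) \<Rightarrow> (nat \<times> nat \<Rightarrow> bool) set" where
  "covering_event n t S sh = {c. covers n (bigor S (\<lambda>u. shift (sh u) (word c u))) (word c t)}"

lemma covering_event_eq:
  "covering_event n t S sh = {c. \<forall>i\<in>{1..n}. \<not> uncovered_at S sh t i c}"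
  by (auto simp: covering_event_def covers_def bigor_def shift_def word_def uncovered_at_def)

lemma source_bits_subset:
  assumes "t \<in> {1..T}" "S \<subseteq> {1..T}" "i \<in> {1..n}"
  shows "source_bits S sh t i \<subseteq> {1..T} \<times> {1..n}"
  using assms by (auto simp: source_bits_def)

lemma source_bits_disjoint:
  assumes "t \<notin> S" "i \<noteq> j"
  shows "source_bits S sh t i \<inter> source_bits S sh t j = {}"
  using assms by (auto simp: source_bits_def)

lemma uncovered_at_iff_source_bits:
  assumes "t \<notin> S"
  shows "uncovered_at S sh t i c \<longleftrightarrow> (\<forall>x\<in>source_bits S sh t i. c x = (x = (t, i)))"
  using assms by (auto simp: uncovered_at_def source_bits_def)

lemma prob_uncovered_at:
  assumes "t \<in> {1..T}" "S \<subseteq> {1..T} - {t}" "i \<in> {1..n}" "0 \<le> p" "p \<le> 1"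
  shows "measure_pmf.prob (bits_pmf T n p) {c. uncovered_at S sh t i c} =
         p * (1 - p) ^ card {u\<in>S. sh u < i}"
proof -
  let ?feed = "(\<lambda>u. (u, i - sh u)) ` {u\<in>S. sh u < i}"
  have fin: "finite ?feed"
    using assms(2) by (auto intro: finite_subset)
  have event_eq: "{c. uncovered_at S sh t i c} = {c. \<forall>x\<in>source_bits S sh t i. c x = (x = (t, i))}"
    using assms(2) uncovered_at_iff_source_bits[of t S] by blast
  have "source_bits S sh t i \<subseteq> {1..T} \<times> {1..n}"
    using source_bits_subset[OF assms(1) _ assms(3)] assms(2) by blast
  then have "measure_pmf.prob (bits_pmf T n p) {c. uncovered_at S sh t i c} =
             (\<Prod>x\<in>source_bits S sh t i. pmf (bernoulli_pmf p) (x = (t, i)))"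
    unfolding bits_pmf_def event_eq by (rule prob_Pi_pmf_cylinder[rotated]) simp
  also have "\<dots> = pmf (bernoulli_pmf p) True * (\<Prod>x\<in>?feed. pmf (bernoulli_pmf p) False)"
  proof -
    have "(t, i) \<notin> ?feed"
      using assms(2) by auto
    moreover have "(x = (t, i)) = False" if "x \<in> ?feed" for x
      using that \<open>(t, i) \<notin> ?feed\<close> by auto
    ultimately show ?thesis
      unfolding source_bits_def by (simp add: fin cong: prod.cong)
  qed
  also have "\<dots> = p * (1 - p) ^ card ?feed"
    using assms(4,5) by simp
  also have "card ?feed = card {u\<in>S. sh u < i}"
    by (rule card_image) (auto simp: inj_on_def)
  finally show ?thesis .
qed

lemma prob_covering_event_le:
  assumes "t \<in> {1..T}" "S \<subseteq> {1..T} - {t}" "card S = M" "0 \<le> p" "p \<le> 1"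
  shows "measure_pmf.prob (bits_pmf T n p) (covering_event n t S sh) \<le> (1 - p * (1 - p) ^ M) ^ n"
proof -
  let ?P = "bits_pmf T n p"
  have tS: "t \<notin> S" and finS: "finite S"
    using assms(2) by (auto intro: finite_subset)
  have "measure_pmf.prob ?P (covering_event n t S sh) =
        (\<Prod>i\<in>{1..n}. measure_pmf.prob ?P {c. \<not> uncovered_at S sh t i c})"
    unfolding covering_event_eq bits_pmf_def
  proof (rule prob_Pi_pmf_Ball_indep[where D = "source_bits S sh t"])
    show "source_bits S sh t i \<subseteq> {1..T} \<times> {1..n}" if "i \<in> {1..n}" for i
      using source_bits_subset[OF assms(1) _ that] assms(2) by blast
    show "(\<not> uncovered_at S sh t i c) = (\<not> uncovered_at S sh t i c')"
      if "\<forall>x\<in>source_bits S sh t i. c x = c' x" for i c c'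
      using that uncovered_at_iff_source_bits[OF tS] by auto
  qed (use source_bits_disjoint[OF tS] in auto)
  also have "\<dots> = (\<Prod>i\<in>{1..n}. 1 - p * (1 - p) ^ card {u\<in>S. sh u < i})"
  proof (rule prod.cong[OF refl])
    fix i assume i: "i \<in> {1..n}"
    have "{c. \<not> uncovered_at S sh t i c} = space ?P - {c. uncovered_at S sh t i c}"
      by auto
    then show "measure_pmf.prob ?P {c. \<not> uncovered_at S sh t i c} =
               1 - p * (1 - p) ^ card {u\<in>S. sh u < i}"
      using measure_pmf.prob_compl[of "{c. uncovered_at S sh t i c}" ?P]
            prob_uncovered_at[OF assms(1,2) i assms(4,5)] by simp
  qed
  also have "\<dots> \<le> (\<Prod>i\<in>{1..n}. 1 - p * (1 - p) ^ M)"
  proof (rule prod_mono)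
    fix i
    have "card {u\<in>S. sh u < i} \<le> M"
      using card_mono[OF finS, of "{u\<in>S. sh u < i}"] assms(3) by auto
    then have pow_le: "(1 - p) ^ M \<le> (1 - p) ^ card {u\<in>S. sh u < i}"
      using assms(4,5) by (intro power_decreasing) auto
    have "p * (1 - p) ^ card {u\<in>S. sh u < i} \<le> 1"
      using assms(4,5) by (intro mult_le_one power_le_one) auto
    then show "0 \<le> 1 - p * (1 - p) ^ card {u\<in>S. sh u < i} \<and>
               1 - p * (1 - p) ^ card {u\<in>S. sh u < i} \<le> 1 - p * (1 - p) ^ M"
      using mult_left_mono[OF pow_le assms(4)] by linarith
  qed
  finally show ?thesis
    by simp
qed

lemma exp_neg_one_le_power: "exp (-1) \<le> (1 - 1 / (real M + 1)) ^ M"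
proof (cases "M = 0")
  case False
  have "1 + 1 / real M \<le> exp (1 / real M)"
    by (rule exp_ge_add_one_self)
  then have "inverse (exp (1 / real M)) \<le> inverse (1 + 1 / real M)"
    by (rule le_imp_inverse_le) (simp add: add_pos_nonneg)
  then have "exp (- (1 / real M)) \<le> 1 - 1 / (real M + 1)"
    using False by (simp add: exp_minus field_simps)
  then have "exp (- (1 / real M)) ^ M \<le> (1 - 1 / (real M + 1)) ^ M"
    by (rule power_mono) simp
  moreover have "exp (- (1 / real M)) ^ M = exp (-1)"
    using False by (simp add: exp_of_nat_mult[symmetric])
  ultimately show ?thesis
    by simp
qed simp

lemma power_one_minus_le_exp:
  fixes a b :: real
  assumes "b \<le> a" "a \<le> 1"
  shows "(1 - a) ^ n \<le> exp (- (real n * b))"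
proof -
  have "1 - a \<le> exp (- b)"
    using exp_ge_add_one_self[of "- a"] exp_le_cancel_iff[of "- a" "- b"] assms(1) by linarith
  then have "(1 - a) ^ n \<le> exp (- b) ^ n"
    by (rule power_mono) (use assms(2) in simp)
  also have "\<dots> = exp (- (real n * b))"
    by (simp add: exp_of_nat_mult[symmetric])
  finally show ?thesis .
qed

definition cover_patterns :: "nat \<Rightarrow> nat \<Rightarrow> nat \<Rightarrow> (nat \<times> nat set \<times> (nat \<Rightarrow> nat)) set" where
  "cover_patterns T M n =
     (SIGMA t:{1..T}. SIGMA S:{S. S \<subseteq> {1..T} - {t} \<and> card S = M}. S \<rightarrow>\<^sub>E {..<n})"

lemma E_id_subset_covering_events:
  "E_id T M n \<subseteq> (\<Union>(t, S, sh)\<in>cover_patterns T M n. covering_event n t S sh)"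
proof
  fix c assume "c \<in> E_id T M n"
  then obtain t S sh where t: "t \<in> {1..T}" and S: "S \<subseteq> {1..T} - {t}" "card S = M"
    and sh: "\<forall>u\<in>S. sh u < n" and "c \<in> covering_event n t S sh"
    unfolding E_id_def covering_event_def by blast
  moreover have "covering_event n t S (restrict sh S) = covering_event n t S sh"
    by (simp add: covering_event_def bigor_def cong: bex_cong)
  moreover have "(t, S, restrict sh S) \<in> cover_patterns T M n"
    using t S sh by (auto simp: cover_patterns_def)
  ultimately show "c \<in> (\<Union>(t, S, sh)\<in>cover_patterns T M n. covering_event n t S sh)"
    by force
qed

lemma
  shows finite_cover_patterns: "finite (cover_patterns T M n)"
    and card_cover_patterns: "card (cover_patterns T M n) = T * ((T - 1 choose M) * n ^ M)"
proof -
  let ?Subsets = "\<lambda>t. {S. S \<subseteq> {1..T} - {t} \<and> card S = M}"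
  let ?Shifts = "\<lambda>S. S \<rightarrow>\<^sub>E {..<n::nat}"
  have fin_Subsets: "finite (?Subsets t)" for t
    by auto
  have fin_Shifts: "finite (?Shifts S)" and card_Shifts: "card (?Shifts S) = n ^ M"
    if "S \<in> ?Subsets t" for S t
  proof -
    have "finite S"
      using that by (blast intro: finite_subset[OF _ finite_atLeastAtMost])
    then show "finite (?Shifts S)" "card (?Shifts S) = n ^ M"
      using that by (auto simp: card_PiE finite_PiE)
  qed
  have card_Subsets: "card (?Subsets t) = T - 1 choose M" if "t \<in> {1..T}" for t
    using n_subsets[of "{1..T} - {t}" M] that by simp
  have fin_inner: "finite (SIGMA S:?Subsets t. ?Shifts S)" for t
    using fin_Subsets fin_Shifts by blast
  show "finite (cover_patterns T M n)"
    unfolding cover_patterns_def using fin_inner by blast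
  have "card (SIGMA S:?Subsets t. ?Shifts S) = (T - 1 choose M) * n ^ M" if "t \<in> {1..T}" for t
  proof -
    have "card (SIGMA S:?Subsets t. ?Shifts S) = (\<Sum>S\<in>?Subsets t. card (?Shifts S))"
      by (rule card_SigmaI[OF fin_Subsets]) (use fin_Shifts in blast)
    also have "\<dots> = (\<Sum>S\<in>?Subsets t. n ^ M)"
      by (rule sum.cong[OF refl card_Shifts])
    finally show ?thesis
      using card_Subsets[OF that] by simp
  qed
  then show "card (cover_patterns T M n) = T * ((T - 1 choose M) * n ^ M)"
    unfolding cover_patterns_def using card_SigmaI fin_inner by simp
qed

lemma card_cover_patterns_le: "card (cover_patterns T M n) \<le> T ^ (M + 1) * n ^ M"
proof -
  have "T - 1 choose M \<le> T ^ M"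
    using binomial_le_pow[of M "T - 1"] power_mono[of "T - 1" T M]
    by (cases "M \<le> T - 1") (auto simp: binomial_eq_0)
  then show ?thesis
    unfolding card_cover_patterns by (simp add: mult_le_mono)
qed

lemma prob_covering_event_le_exp:
  assumes "(t, S, sh) \<in> cover_patterns T M n"
  shows "measure_pmf.prob (bits_pmf T n (1 / (real M + 1))) (covering_event n t S sh)
           \<le> exp (- (real n / (real M + 1) * exp (-1)))"
proof -
  define p :: real where "p = 1 / (real M + 1)"
  have p: "0 \<le> p" "p \<le> 1"
    unfolding p_def by auto
  have "t \<in> {1..T}" "S \<subseteq> {1..T} - {t}" "card S = M"
    using assms by (auto simp: cover_patterns_def)
  from prob_covering_event_le[OF this p]
  have "measure_pmf.prob (bits_pmf T n p) (covering_event n t S sh) \<le> (1 - p * (1 - p) ^ M) ^ n" .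
  also have "\<dots> \<le> exp (- (real n * (p * exp (-1))))"
  proof (rule power_one_minus_le_exp)
    show "p * exp (-1) \<le> p * (1 - p) ^ M"
      using exp_neg_one_le_power[of M] p(1) by (intro mult_left_mono) (simp_all add: p_def)
    show "p * (1 - p) ^ M \<le> 1"
      using p by (intro mult_le_one power_le_one) auto
  qed
  finally show ?thesis
    by (simp add: p_def)
qed

theorem mainTheorem2:
  fixes M T n :: nat
  assumes "M \<ge> 1" and "T \<ge> M + 1" and "n \<ge> 1"
  shows "measure_pmf.prob (bits_pmf T n (1 / (real M + 1))) (E_id T M n)
           \<le> exp ((real M + 1) * ln (real T) + real M * ln (real n)
                  - real n / (real M + 1) * exp (-1))"
proof -
  let ?P = "bits_pmf T n (1 / (real M + 1))" and ?W = "cover_patterns T M n"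
    and ?Cov = "\<lambda>(t, S, sh). covering_event n t S sh"
  define bound where "bound = exp (- (real n / (real M + 1) * exp (-1)))"
  have "measure_pmf.prob ?P (E_id T M n) \<le> measure_pmf.prob ?P (\<Union>x\<in>?W. ?Cov x)"
    by (rule measure_pmf.finite_measure_mono[OF E_id_subset_covering_events]) simp
  also have "\<dots> \<le> (\<Sum>x\<in>?W. measure_pmf.prob ?P (?Cov x))"
    by (rule measure_UNION_le[OF finite_cover_patterns]) simp
  also have "\<dots> \<le> card ?W * bound"
    by (rule sum_bounded_above) (use prob_covering_event_le_exp in \<open>auto simp: bound_def\<close>)
  also have "\<dots> \<le> real (T ^ (M + 1) * n ^ M) * bound"
    unfolding bound_def by (intro mult_right_mono card_cover_patterns_le[THEN of_nat_mono]) simp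
  also have "\<dots> = real T ^ (M + 1) * real n ^ M * bound"
    by simp
  also have "\<dots> = exp ((real M + 1) * ln (real T) + real M * ln (real n)
                    - real n / (real M + 1) * exp (-1))"
  proof -
    have "exp ((real M + 1) * ln (real T)) = real T ^ (M + 1)"
      using exp_of_nat_mult[of "M + 1" "ln (real T)"] assms by (simp add: add.commute)
    moreover have "exp (real M * ln (real n)) = real n ^ M"
      using exp_of_nat_mult[of M "ln (real n)"] assms by simp
    ultimately show ?thesis
      by (simp add: bound_def exp_diff exp_add exp_minus field_simps)
  qed
  finally show ?thesis .
qed

end
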